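(* In the While-language extended with non-deterministic input, for every command $c$ and stores $\sigma,\sigma''$: if $(c,\sigma,\Downarrow)\Rightarrow^{co}_G\sigma'',\Uparrow$, then there exist $c',\sigma'$ such that $(c,\sigma)\to(c',\sigma')$ and $(c',\sigma',\Downarrow)\Rightarrow^{co}_G\sigma'',\Uparrow$.
   Context: Extended While-language syntax: variables $x$ range over a countably infinite set $\mathit{Var}$; $n$ ranges over natural numbers; values are $v ::= \mathsf{null}\mid n$ ($\mathsf{null}$ distinct from every natural number); expressions are $e ::= v\mid x\mid e_1\oplus e_2\mid\mathsf{input}$ with $\oplus\in\{+,-,*\}$, where $\oplus(n_1,n_2)$ is the result of the operation on naturals; commands are $c ::= \mathsf{skip}\mid\mathsf{alloc}\ x\mid x:=e\mid c_1;c_2\mid \mathsf{if}\ e\ c_1\ c_2\mid\mathsf{while}\ e\ c$. A store $\sigma$ is a finite partial map from $\mathit{Var}$ to values, with domain $\mathrm{dom}(\sigma)$, lookup $\sigma(x)$, update $\sigma[x\mapsto v]$. Expression evaluation $(e,\sigma)\Rightarrow_E v$ is the least relation with: $(v,\sigma)\Rightarrow_E v$; $(x,\sigma)\Rightarrow_E\sigma(x)$ if $x\in\mathrm{dom}(\sigma)$; if $(e_1,\sigma)\Rightarrow_E n_1$ and $(e_2,\sigma)\Rightarrow_E n_2$ with $n_1,n_2$ naturals then $(e_1\oplus e_2,\sigma)\Rightarrow_E\oplus(n_1,n_2)$; and $(\mathsf{input},\sigma)\Rightarrow_E v$ for every value $v$. Small-step relation $(c,\sigma)\to(c',\sigma')$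 is the least relation with: $(\mathsf{alloc}\ x,\sigma)\to(\mathsf{skip},\sigma[x\mapsto\mathsf{null}])$ if $x\notin\mathrm{dom}(\sigma)$; $(x:=e,\sigma)\to(\mathsf{skip},\sigma[x\mapsto v])$ if $x\in\mathrm{dom}(\sigma)$ and $(e,\sigma)\Rightarrow_E v$; $(c_1;c_2,\sigma)\to(c_1';c_2,\sigma')$ if $(c_1,\sigma)\to(c_1',\sigma')$; $(\mathsf{skip};c_2,\sigma)\to(c_2,\sigma)$; $(\mathsf{if}\ e\ c_1\ c_2,\sigma)\to(c_1,\sigma)$ if $(e,\sigma)\Rightarrow_E v$, $v\neq 0$; $(\mathsf{if}\ e\ c_1\ c_2,\sigma)\to(c_2,\sigma)$ if $(e,\sigma)\Rightarrow_E 0$; $(\mathsf{while}\ e\ c,\sigma)\to(c;\mathsf{while}\ e\ c,\sigma)$ if $(e,\sigma)\Rightarrow_E v$, $v\neq0$; $(\mathsf{while}\ e\ c,\sigma)\to(\mathsf{skip},\sigma)$ if $(e,\sigma)\Rightarrow_E 0$. Flag-based big-step semantics: status flags $\delta ::= \Downarrow\mid\Uparrow$. Expression evaluation $(e,\sigma,\delta)\Rightarrow_{GE}v,\delta'$ is the least relation with: $(v,\sigma,\Downarrow)\Rightarrow_{GE}v,\Downarrow$; $(x,\sigma,\Downarrow)\Rightarrow_{GE}\sigma(x),\Downarrow$ if $x\in\mathrm{dom}(\sigma)$; if $(e_1,\sigma,\Downarrow)\Rightarrow_{GE}n_1,\delta$ and $(e_2,\sigma,\delta)\Rightarrow_{GE}n_2,\delta'$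 ($n_1,n_2$ naturals) then $(e_1\oplus e_2,\sigma,\Downarrow)\Rightarrow_{GE}\oplus(n_1,n_2),\delta'$; $(\mathsf{input},\sigma,\Downarrow)\Rightarrow_{GE}v,\Downarrow$ for every value $v$; and $(e,\sigma,\Uparrow)\Rightarrow_{GE}v,\Uparrow$ for every value $v$. The command rules for judgments $(c,\sigma,\delta)\Rightarrow_G\sigma',\delta'$ are: $(\mathsf{skip},\sigma,\Downarrow)\Rightarrow_G\sigma,\Downarrow$; $(\mathsf{alloc}\ x,\sigma,\Downarrow)\Rightarrow_G\sigma[x\mapsto\mathsf{null}],\Downarrow$ if $x\notin\mathrm{dom}(\sigma)$; $(x:=e,\sigma,\Downarrow)\Rightarrow_G\sigma[x\mapsto v],\delta$ if $x\in\mathrm{dom}(\sigma)$ and $(e,\sigma,\Downarrow)\Rightarrow_{GE}v,\delta$; $(c_1;c_2,\sigma,\Downarrow)\Rightarrow_G\sigma'',\delta'$ if $(c_1,\sigma,\Downarrow)\Rightarrow_G\sigma',\delta$ and $(c_2,\sigma',\delta)\Rightarrow_G\sigma'',\delta'$; $(\mathsf{if}\ e\ c_1\ c_2,\sigma,\Downarrow)\Rightarrow_G\sigma',\delta'$ if $v\ne0$, $(e,\sigma,\Downarrow)\Rightarrow_{GE}v,\delta$ and $(c_1,\sigma,\delta)\Rightarrow_G\sigma',\delta'$; $(\mathsf{if}\ e\ c_1\ c_2,\sigma,\Downarrow)\Rightarrow_G\sigma',\delta'$ if $(e,\sigma,\Downarrow)\Rightarrow_{GE}0,\delta$ and $(c_2,\sigma,\delta)\Rightarrow_G\sigma',\delta'$;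 $(\mathsf{while}\ e\ c,\sigma,\Downarrow)\Rightarrow_G\sigma'',\delta''$ if $(e,\sigma,\Downarrow)\Rightarrow_{GE}v,\delta$, $v\ne0$, $(c,\sigma,\delta)\Rightarrow_G\sigma',\delta'$ and $(\mathsf{while}\ e\ c,\sigma',\delta')\Rightarrow_G\sigma'',\delta''$; $(\mathsf{while}\ e\ c,\sigma,\Downarrow)\Rightarrow_G\sigma,\delta$ if $(e,\sigma,\Downarrow)\Rightarrow_{GE}0,\delta$; $(c,\sigma,\Uparrow)\Rightarrow_G\sigma',\Uparrow$ for every store $\sigma'$. $\Rightarrow^{co}_G$ is the coinductive interpretation of these command rules (greatest relation such that every element is the conclusion of a rule instance whose command premises lie in it). *)

theory Defs
  imports "HOL-Library.Finite_Map"
begin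

type_synonym vname = string

datatype val = Null | Num nat

datatype binop = Plus | Minus | Times

fun opf :: "binop \<Rightarrow> nat \<Rightarrow> nat \<Rightarrow> nat" where
  "opf Plus a b = a + b"
| "opf Minus a b = a - b"
| "opf Times a b = a * b"

datatype exp = V val | Var vname | Bin binop exp exp | Input

datatype com = Skip | Alloc vname | Assign vname exp | Seq com com
  | If exp com com | While exp com

type_synonym store = "(vname, val) fmap"

datatype flag = Conv | Div   (* Conv = \<Down>, Div = \<Up> *)

inductive eval :: "exp \<Rightarrow> store \<Rightarrow> val \<Rightarrow> bool" where
  "eval (V v) \<sigma> v"
| "fmlookup \<sigma> x = Some v \<Longrightarrow> eval (Var x) \<sigma> v"
| "eval e1 \<sigma> (Num n1) \<Longrightarrow> eval e2 \<sigma> (Num n2) \<Longrightarrow> eval (Bin op e1 e2) \<sigma> (Num (opf op n1 n2))"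
| "eval Input \<sigma> v"

inductive step :: "com \<times> store \<Rightarrow> com \<times> store \<Rightarrow> bool" where
  "x \<notin> fmdom' \<sigma> \<Longrightarrow> step (Alloc x, \<sigma>) (Skip, fmupd x Null \<sigma>)"
| "x \<in> fmdom' \<sigma> \<Longrightarrow> eval e \<sigma> v \<Longrightarrow> step (Assign x e, \<sigma>) (Skip, fmupd x v \<sigma>)"
| "step (c1, \<sigma>) (c1', \<sigma>') \<Longrightarrow> step (Seq c1 c2, \<sigma>) (Seq c1' c2, \<sigma>')"
| "step (Seq Skip c2, \<sigma>) (c2, \<sigma>)"
| "eval e \<sigma> v \<Longrightarrow> v \<noteq> Num 0 \<Longrightarrow> step (If e c1 c2, \<sigma>) (c1, \<sigma>)"
| "eval e \<sigma> (Num 0) \<Longrightarrow> step (If e c1 c2, \<sigma>) (c2, \<sigma>)"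
| "eval e \<sigma> v \<Longrightarrow> v \<noteq> Num 0 \<Longrightarrow> step (While e c, \<sigma>) (Seq c (While e c), \<sigma>)"
| "eval e \<sigma> (Num 0) \<Longrightarrow> step (While e c, \<sigma>) (Skip, \<sigma>)"

inductive geval :: "exp \<Rightarrow> store \<Rightarrow> flag \<Rightarrow> val \<Rightarrow> flag \<Rightarrow> bool" where
  "geval (V v) \<sigma> Conv v Conv"
| "fmlookup \<sigma> x = Some v \<Longrightarrow> geval (Var x) \<sigma> Conv v Conv"
| "geval e1 \<sigma> Conv (Num n1) \<delta> \<Longrightarrow> geval e2 \<sigma> \<delta> (Num n2) \<delta>' \<Longrightarrow>
     geval (Bin op e1 e2) \<sigma> Conv (Num (opf op n1 n2)) \<delta>'"
| "geval Input \<sigma> Conv v Conv"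
| "geval e \<sigma> Div v Div"

coinductive bigG_co :: "com \<Rightarrow> store \<Rightarrow> flag \<Rightarrow> store \<Rightarrow> flag \<Rightarrow> bool" where
  "bigG_co Skip \<sigma> Conv \<sigma> Conv"
| "x \<notin> fmdom' \<sigma> \<Longrightarrow> bigG_co (Alloc x) \<sigma> Conv (fmupd x Null \<sigma>) Conv"
| "x \<in> fmdom' \<sigma> \<Longrightarrow> geval e \<sigma> Conv v \<delta> \<Longrightarrow> bigG_co (Assign x e) \<sigma> Conv (fmupd x v \<sigma>) \<delta>"
| "bigG_co c1 \<sigma> Conv \<sigma>' \<delta> \<Longrightarrow> bigG_co c2 \<sigma>' \<delta> \<sigma>'' \<delta>' \<Longrightarrow> bigG_co (Seq c1 c2) \<sigma> Conv \<sigma>'' \<delta>'"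
| "v \<noteq> Num 0 \<Longrightarrow> geval e \<sigma> Conv v \<delta> \<Longrightarrow> bigG_co c1 \<sigma> \<delta> \<sigma>' \<delta>' \<Longrightarrow>
     bigG_co (If e c1 c2) \<sigma> Conv \<sigma>' \<delta>'"
| "geval e \<sigma> Conv (Num 0) \<delta> \<Longrightarrow> bigG_co c2 \<sigma> \<delta> \<sigma>' \<delta>' \<Longrightarrow>
     bigG_co (If e c1 c2) \<sigma> Conv \<sigma>' \<delta>'"
| "geval e \<sigma> Conv v \<delta> \<Longrightarrow> v \<noteq> Num 0 \<Longrightarrow> bigG_co c \<sigma> \<delta> \<sigma>' \<delta>' \<Longrightarrow>
     bigG_co (While e c) \<sigma>' \<delta>' \<sigma>'' \<delta>'' \<Longrightarrow> bigG_co (While e c) \<sigma> Conv \<sigma>'' \<delta>''"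
| "geval e \<sigma> Conv (Num 0) \<delta> \<Longrightarrow> bigG_co (While e c) \<sigma> Conv \<sigma> \<delta>"
| "bigG_co c \<sigma> Div \<sigma>' Div"

end

theory Submission
  imports Defs
begin

text \<open>A derivation of the flag-based judgement started in \<open>Conv\<close> is one rule instance at the root;
  for every command other than \<open>Skip\<close> that instance mirrors one small step. Expression evaluation
  started in \<open>Conv\<close> never raises the flag, so the side conditions of the big-step rule are exactly
  those of the small-step rule. Sequencing recurses into the first component, so structural
  induction on the command suffices; no coinduction is needed.\<close>

lemma geval_ConvD:
  assumes "geval e \<sigma> Conv v \<delta>"
  shows "\<delta> = Conv \<and> eval e \<sigma> v"
proof -
  have "f = Conv \<Longrightarrow> \<delta> = Conv \<and> eval e \<sigma> v" if "geval e \<sigma> f v \<delta>" for f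
    using that by (induction rule: geval.induct) (auto intro: eval.intros)
  then show ?thesis using assms by blast
qed

lemma bigG_co_SkipD:
  assumes "bigG_co Skip \<sigma> Conv \<sigma>' \<delta>"
  shows "\<sigma>' = \<sigma> \<and> \<delta> = Conv"
  using assms by (cases rule: bigG_co.cases) auto

lemma bigG_co_Conv_progress:
  assumes "bigG_co c \<sigma> Conv \<sigma>'' \<delta>"
  shows "c = Skip \<or> (\<exists>c' \<sigma>'. step (c, \<sigma>) (c', \<sigma>') \<and> bigG_co c' \<sigma>' Conv \<sigma>'' \<delta>)"
  using assms
proof (induction c arbitrary: \<sigma> \<sigma>'' \<delta>)
  case Skip
  then show ?case by simp
next
  case (Alloc x)
  then show ?case
    by (cases rule: bigG_co.cases) (auto intro: step.intros bigG_co.intros)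
next
  case (Assign x e)
  then show ?case
    by (cases rule: bigG_co.cases) (auto dest!: geval_ConvD intro: step.intros bigG_co.intros)
next
  case (Seq c1 c2)
  from Seq.prems obtain \<sigma>' \<delta>' where
    c1: "bigG_co c1 \<sigma> Conv \<sigma>' \<delta>'" and c2: "bigG_co c2 \<sigma>' \<delta>' \<sigma>'' \<delta>"
    by (cases rule: bigG_co.cases) auto
  from Seq.IH(1)[OF c1] show ?case
  proof
    assume "c1 = Skip"
    with c1 c2 show ?thesis
      by (auto dest: bigG_co_SkipD intro: step.intros)
  next
    assume "\<exists>c' \<sigma>1. step (c1, \<sigma>) (c', \<sigma>1) \<and> bigG_co c' \<sigma>1 Conv \<sigma>' \<delta>'"
    with c2 show ?thesis
      by (auto intro: step.intros bigG_co.intros)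
  qed
next
  case (If e c1 c2)
  from If.prems show ?case
    by (cases rule: bigG_co.cases) (auto dest!: geval_ConvD intro: step.intros)
next
  case (While e c)
  from While.prems show ?case
    by (cases rule: bigG_co.cases) (auto dest!: geval_ConvD intro: step.intros bigG_co.intros)
qed

theorem lemma28:
  fixes c :: com and \<sigma> \<sigma>'' :: store
  assumes "bigG_co c \<sigma> Conv \<sigma>'' Div"
  shows "\<exists>c' \<sigma>'. step (c, \<sigma>) (c', \<sigma>') \<and> bigG_co c' \<sigma>' Conv \<sigma>'' Div"
proof -
  have "c \<noteq> Skip"
    using assms by (auto dest: bigG_co_SkipD)
  then show ?thesis
    using bigG_co_Conv_progress[OF assms] by blast
qed

end
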